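(* Assume CH. There exists a set $A\subseteq\mathbb{R}^2$ such that every vertical slice $A_x=\{y:(x,y)\in A\}$ ($x\in\mathbb{R}$) is cocountable in $\mathbb{R}$, and $A$ is both completely $\mathcal{M}$-nonmeasurable and completely $\mathcal{N}$-nonmeasurable in $\mathbb{R}^2$.
   Context: $\mathcal{M}$ and $\mathcal{N}$ denote the $\sigma$-ideals of meager and Lebesgue-null subsets of $\mathbb{R}^2$. A set $A\subseteq\mathbb{R}^2$ is completely $\mathcal{I}$-nonmeasurable if $A$ meets every Borel set $B\notin\mathcal{I}$ and contains no Borel set $B\notin\mathcal{I}$. *)

theory Defs
  imports "HOL-Analysis.Analysis" "HOL-Library.Equipollence"
begin

definition CH :: bool where
  "CH \<longleftrightarrow> (\<forall>S :: real set. uncountable S \<longrightarrow> S \<approx> (UNIV :: real set))"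

definition nowhere_dense :: "'a::topological_space set \<Rightarrow> bool" where
  "nowhere_dense S \<longleftrightarrow> interior (closure S) = {}"

definition meager :: "'a::topological_space set \<Rightarrow> bool" where
  "meager S \<longleftrightarrow> (\<exists>F. countable F \<and> (\<forall>N\<in>F. nowhere_dense N) \<and> S \<subseteq> \<Union>F)"

definition lnull :: "(real \<times> real) set \<Rightarrow> bool" where
  "lnull S \<longleftrightarrow> S \<in> null_sets (lebesgue :: (real \<times> real) measure)"

text \<open>Completely I-nonmeasurable, for an ideal given by its membership predicate I.\<close>
definition completely_nonmeasurable :: "('a::topological_space set \<Rightarrow> bool) \<Rightarrow> 'a set \<Rightarrow> bool" where
  "completely_nonmeasurable I A \<longleftrightarrow>
     (\<forall>B \<in> sets borel. \<not> I B \<longrightarrow> A \<inter> B \<noteq> {} \<and> \<not> B \<subseteq> A)"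

end

theory Submission
  imports Defs
begin

text \<open>
  Under CH the reals carry a well-order whose proper initial segments are all countable, and
  the plane has only continuum many \<open>G\<^sub>\<delta>\<close> sets. Every Borel set that is not meager
  (by the Baire property) or not null (by inner regularity) contains a \<open>G\<^sub>\<delta>\<close> set with the
  same property. Index these \<open>G\<^sub>\<delta>\<close> sets by the reals and run a transfinite construction:
  at step \<open>r\<close> choose two fresh points of the \<open>r\<close>-th set, avoiding the countably many
  vertical lines over earlier indices and all earlier choices (possible since countably many
  lines and points form a meager null set); the first point goes into \<open>C\<close>, the second
  stays outside. Then \<open>- C\<close> meets and misses every positive Borel set, and a point of
  \<open>C\<close> over \<open>x\<close> was chosen at a step preceding \<open>x\<close>, so each vertical slice of
  \<open>C\<close> is countable.
\<close>

lemma meager_mono: "meager T \<Longrightarrow> S \<subseteq> T \<Longrightarrow> meager S"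
  unfolding meager_def by (metis subset_trans)

lemma meagerI:
  assumes "countable F" "\<And>N. N \<in> F \<Longrightarrow> nowhere_dense N" "S \<subseteq> \<Union>F"
  shows "meager S"
  using assms unfolding meager_def by metis

lemma meager_empty [simp]: "meager {}"
  by (rule meagerI[of "{}"]) simp_all

lemma meager_UN:
  assumes "countable I" "\<And>i. i \<in> I \<Longrightarrow> meager (A i)"
  shows "meager (\<Union>i\<in>I. A i)"
proof -
  have "\<forall>i\<in>I. \<exists>F. countable F \<and> (\<forall>N\<in>F. nowhere_dense N) \<and> A i \<subseteq> \<Union>F"
    using assms(2) unfolding meager_def by blast
  from bchoice[OF this] obtain F
    where F: "\<forall>i\<in>I. countable (F i) \<and> (\<forall>N\<in>F i. nowhere_dense N) \<and> A i \<subseteq> \<Union>(F i)"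
    by blast
  show ?thesis
  proof (rule meagerI)
    show "countable (\<Union>(F ` I))" by (rule countable_UN) (use F assms(1) in auto)
    show "nowhere_dense N" if "N \<in> \<Union>(F ` I)" for N
    proof -
      from that obtain i where "i \<in> I" "N \<in> F i" by blast
      with F show ?thesis by blast
    qed
    have "A i \<subseteq> \<Union>(F i)" if "i \<in> I" for i
      using F that by blast
    then show "(\<Union>i\<in>I. A i) \<subseteq> \<Union>(\<Union>(F ` I))"
      by (intro UN_least) (meson UN_upper Union_mono order_trans)
  qed
qed

lemma meager_Un:
  assumes "meager A" "meager B"
  shows "meager (A \<union> B)"
proof -
  have "meager (\<Union>S\<in>{A, B}. S)"
    by (rule meager_UN) (use assms in auto)
  then show ?thesis by simp
qed

lemma nowhere_dense_closed: "closed S \<Longrightarrow> interior S = {} \<Longrightarrow> nowhere_dense S"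
  unfolding nowhere_dense_def by (simp add: closure_closed)

lemma nowhere_dense_imp_meager: "nowhere_dense S \<Longrightarrow> meager S"
  by (rule meagerI[of "{S}"]) auto

lemma nowhere_dense_closure_diff_open:
  assumes "open U"
  shows "nowhere_dense (closure U - U)"
proof (rule nowhere_dense_closed)
  show "closed (closure U - U)" using assms by (simp add: closed_Diff)
  let ?W = "interior (closure U - U)"
  have "?W \<inter> U = {}" using interior_subset by blast
  then have "?W \<inter> closure U = {}" using open_Int_closure_eq_empty[of ?W U] by auto
  then show "?W = {}" using interior_subset by blast
qed

lemma meager_closed_cover:
  fixes S :: "'a::topological_space set"
  assumes "meager S"
  shows "\<exists>N. (\<forall>n::nat. closed (N n) \<and> nowhere_dense (N n)) \<and> S \<subseteq> (\<Union>n. N n)"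
proof -
  obtain F where F: "countable F" "\<And>N. N \<in> F \<Longrightarrow> nowhere_dense N" "S \<subseteq> \<Union>F"
    using assms unfolding meager_def by blast
  \<comment> \<open>adding the empty set makes the cover nonempty, so that it can be enumerated\<close>
  define F' where "F' = closure ` insert {} F"
  have F': "closed N \<and> nowhere_dense N" if "N \<in> F'" for N
    using that F(2) unfolding F'_def nowhere_dense_def by auto
  have "S \<subseteq> \<Union>F'"
  proof
    fix x assume "x \<in> S"
    then obtain M where "M \<in> F" "x \<in> M" using F(3) by blast
    then show "x \<in> \<Union>F'" using closure_subset[of M] unfolding F'_def by blast
  qed
  moreover have range: "range (from_nat_into F') = F'"
    by (rule range_from_nat_into) (use F(1) in \<open>auto simp: F'_def\<close>)
  moreover have "from_nat_into F' n \<in> F'" for n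
    using range by blast
  ultimately show ?thesis
    using F' by (intro exI[of _ "from_nat_into F'"]) auto
qed

lemma open_not_meager:
  fixes U :: "'a::{real_normed_vector,heine_borel} set"
  assumes "open U" "U \<noteq> {}"
  shows "\<not> meager U"
proof
  assume "meager U"
  then obtain F where F: "countable F" "\<And>N. N\<in>F \<Longrightarrow> nowhere_dense N" "U \<subseteq> \<Union>F"
    unfolding meager_def by metis
  define G where "G = (\<lambda>N. - closure N) ` F"
  have "UNIV \<subseteq> closure (\<Inter>G)"
  proof (rule Baire)
    show "countable G" using F(1) by (simp add: G_def)
    fix T assume "T \<in> G"
    then obtain N where N: "N \<in> F" "T = - closure N" by (auto simp: G_def)
    have "closure T = UNIV"
      using F(2)[OF N(1)] N(2) by (simp add: closure_complement nowhere_dense_def)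
    then show "openin (top_of_set UNIV) T \<and> UNIV \<subseteq> closure T"
      using N(2) by auto
  qed simp
  then have "U \<inter> \<Inter>G \<noteq> {}"
    using assms open_Int_closure_eq_empty[OF assms(1), of "\<Inter>G"] by auto
  then obtain y N where "y \<in> \<Inter>G" "N \<in> F" "y \<in> N"
    using F(3) by blast
  then show False
    using closure_subset[of N] by (auto simp: G_def)
qed

definition Baire_property :: "'a::topological_space set \<Rightarrow> bool" where
  "Baire_property S \<longleftrightarrow> (\<exists>U. open U \<and> meager (sym_diff S U))"

lemma borel_imp_Baire_property:
  assumes "B \<in> sets borel"
  shows "Baire_property B"
proof -
  have "B \<in> sigma_sets UNIV {S. open S}" using assms sets_borel by auto
  then show ?thesis
    unfolding Baire_property_def
  proof induct
    case (Basic a) then show ?case by (intro exI[of _ a]) auto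
  next
    case Empty then show ?case by (intro exI[of _ "{}"]) auto
  next
    case (Compl a)
    then obtain U where U: "open U" "meager (sym_diff a U)" by blast
    \<comment> \<open>\<open>- closure U\<close> approximates the complement, up to the nowhere dense boundary of \<open>U\<close>\<close>
    have m: "meager (sym_diff a U \<union> (closure U - U))"
      using meager_Un[OF U(2) nowhere_dense_imp_meager[OF nowhere_dense_closure_diff_open[OF U(1)]]] .
    have "sym_diff (UNIV - a) (- closure U) \<subseteq> sym_diff a U \<union> (closure U - U)"
      using closure_subset[of U] by auto
    then have "meager (sym_diff (UNIV - a) (- closure U))"
      by (rule meager_mono[OF m])
    moreover have "open (- closure U)" by auto
    ultimately show ?case by blast
  next
    case (Union a)
    then have "\<forall>i. \<exists>U. open U \<and> meager (sym_diff (a i) U)" by blast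
    from choice[OF this] obtain U
      where U: "\<And>i. open (U i)" "\<And>i. meager (sym_diff (a i) (U i))"
      by blast
    have m: "meager (\<Union>i. sym_diff (a i) (U i))"
      using U(2) by (intro meager_UN) auto
    have "sym_diff (\<Union>i. a i) (\<Union>i. U i) \<subseteq> (\<Union>i. sym_diff (a i) (U i))"
      by blast
    then have "meager (sym_diff (\<Union>i. a i) (\<Union>i. U i))"
      by (rule meager_mono[OF m])
    moreover have "open (\<Union>i. U i)" using U(1) by auto
    ultimately show ?case by blast
  qed
qed

lemma borel_not_meager_contains_gdelta:
  fixes B :: "'a::{real_normed_vector,heine_borel} set"
  assumes "B \<in> sets borel" "\<not> meager B"
  obtains G where "gdelta G" "G \<subseteq> B" "\<not> meager G"
proof -
  obtain U where U: "open U" "meager (sym_diff B U)"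
    using borel_imp_Baire_property[OF assms(1)] unfolding Baire_property_def by blast
  obtain N :: "nat \<Rightarrow> 'a set"
    where N: "\<And>n. closed (N n)" "\<And>n. nowhere_dense (N n)" "sym_diff B U \<subseteq> (\<Union>n. N n)"
    using meager_closed_cover[OF U(2)] by blast
  define G where "G = (\<Inter>n. U - N n)"
  have "gdelta G"
    unfolding G_def by (rule gdelta.intros) (use U(1) N(1) in auto)
  moreover have "G \<subseteq> B"
    using N(3) by (auto simp: G_def)
  moreover have "\<not> meager G"
  proof
    assume "meager G"
    moreover have "meager (\<Union>n. N n)"
      using N(2) by (intro meager_UN nowhere_dense_imp_meager) auto
    ultimately have "meager (G \<union> (\<Union>n. N n))"
      by (rule meager_Un)
    moreover have "U \<subseteq> G \<union> (\<Union>n. N n)"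
      by (auto simp: G_def)
    ultimately have "U = {}"
      using open_not_meager U(1) meager_mono by blast
    then show False
      using assms(2) U(2) by simp
  qed
  ultimately show ?thesis using that by blast
qed

lemma closed_imp_gdelta:
  fixes K :: "'a::metric_space set"
  assumes "closed K"
  shows "gdelta K"
proof (cases "K = {}")
  case True
  then show ?thesis
    using gdelta.intros[of "\<lambda>n. {}"] by simp
next
  case False
  have "K = (\<Inter>n. {x. infdist x K < inverse (Suc n)})"
  proof (intro equalityI subsetI)
    fix x assume "x \<in> (\<Inter>n. {x. infdist x K < inverse (Suc n)})"
    then have "infdist x K < inverse (Suc n)" for n
      by blast
    then have "infdist x K = 0"
      using reals_Archimedean infdist_nonneg less_asym order_neq_le_trans by metis
    then show "x \<in> K"
      using in_closure_iff_infdist_zero[OF False] assms closure_closed by metis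
  qed (simp add: infdist_zero)
  moreover have "open {x. infdist x K < inverse (Suc n)}" for n
    by (intro open_Collect_less continuous_intros)
  ultimately show ?thesis
    by (metis gdelta.intros)
qed

lemma borel_not_negligible_contains_closed:
  fixes B :: "'a::euclidean_space set"
  assumes "B \<in> sets borel" "\<not> negligible B"
  obtains K where "closed K" "K \<subseteq> B" "\<not> negligible K"
proof -
  have "B \<in> sets lebesgue"
    using assms(1) by (metis sets_completionI_sets sets_lborel)
  then obtain C T where C: "fsigma C" "T \<in> null_sets lebesgue" "C \<union> T = B"
    by (rule lebesgue_set_almost_fsigma)
  obtain F :: "nat \<Rightarrow> 'a set" where F: "\<And>n. closed (F n)" "C = (\<Union>n. F n)"
    using C(1) unfolding fsigma.simps by blast
  have "negligible T"
    using C(2) negligible_iff_null_sets by blast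
  then have "\<not> negligible C"
    using assms(2) C(3) negligible_Un by metis
  then obtain n where "\<not> negligible (F n)"
    using negligible_Union_nat[of F] F(2) by blast
  then show ?thesis
    by (intro that[of "F n"]) (use F C(3) in auto)
qed

lemma gdelta_subset_range_real:
  obtains g :: "real \<Rightarrow> 'a::euclidean_space set" where "\<And>S. gdelta S \<Longrightarrow> S \<in> range g"
proof -
  obtain Bb :: "nat \<Rightarrow> 'a set"
    where "inj Bb" "\<And>n. open (Bb n)" and Bb: "\<And>S. open S \<Longrightarrow> \<exists>k. S = \<Union>{Bb n |n. n \<in> k}"
    by (rule univ_second_countable_sequence) blast
  \<comment> \<open>a set \<open>N\<close> of naturals codes the sequence of open sets with basis indices \<open>{n. prod_encode (i, n) \<in> N}\<close>\<close>
  define G where "G N = (\<Inter>i. \<Union>{Bb n |n. prod_encode (i, n) \<in> N})" for N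
  obtain f :: "nat set \<Rightarrow> real" where f: "bij f"
    using nat_sets_eqpoll_reals unfolding eqpoll_def by blast
  show thesis
  proof (rule that[of "G \<circ> inv f"])
    fix S :: "'a set" assume "gdelta S"
    then obtain U :: "nat \<Rightarrow> 'a set" where U: "\<And>i. open (U i)" "S = (\<Inter>i. U i)"
      unfolding gdelta.simps by blast
    then have "\<forall>i. \<exists>k. U i = \<Union>{Bb n |n. n \<in> k}"
      using Bb by blast
    from choice[OF this] obtain k where k: "\<And>i. U i = \<Union>{Bb n |n. n \<in> k i}"
      by blast
    define N where "N = {prod_encode (i, n) |i n. n \<in> k i}"
    have "G N = S"
      unfolding G_def N_def U(2) k by (simp add: prod_encode_eq)
    moreover have "inv f (f N) = N"
      using f by (simp add: bij_is_inj)
    ultimately have "S = (G \<circ> inv f) (f N)"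
      by simp
    then show "S \<in> range (G \<circ> inv f)"
      by (rule range_eqI)
  qed
qed

lemma borel_positive_contains_gdelta:
  fixes B :: "'a::euclidean_space set"
  assumes "B \<in> sets borel" "\<not> meager B \<or> \<not> negligible B"
  obtains G where "gdelta G" "G \<subseteq> B" "\<not> meager G \<or> \<not> negligible G"
proof (cases "meager B")
  case False
  then show ?thesis
    using borel_not_meager_contains_gdelta[OF assms(1)] that by blast
next
  case True
  then obtain K where "closed K" "K \<subseteq> B" "\<not> negligible K"
    using borel_not_negligible_contains_closed[OF assms(1)] assms(2) by blast
  then show ?thesis
    using closed_imp_gdelta that by blast
qed

lemma not_subset_countable_vertical_lines:
  fixes S :: "(real \<times> real) set"
  assumes "\<not> meager S \<or> \<not> negligible S" "countable X" "countable P"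
  shows "\<not> S \<subseteq> {z. fst z \<in> X} \<union> P"
proof -
  define L where "L x = {z::real \<times> real. (1::real, 0::real) \<bullet> z = x}" for x
  have lines: "{z. fst z \<in> X} = (\<Union>x\<in>X. L x)"
    by (auto simp: L_def)
  have points: "P = (\<Union>p\<in>P. {p})"
    by auto
  have "(1::real, 0::real) \<noteq> 0"
    by (simp add: zero_prod_def)
  then have "nowhere_dense (L x)" "negligible (L x)" for x
    unfolding L_def
    by (auto intro: nowhere_dense_closed closed_hyperplane interior_hyperplane negligible_hyperplane)
  then have "meager (\<Union>x\<in>X. L x)" "negligible (\<Union>x\<in>X. L x)"
    using assms(2) by (auto intro: meager_UN nowhere_dense_imp_meager negligible_countable_Union)
  moreover have "meager (\<Union>p\<in>P. {p})"
    by (rule meager_UN[OF assms(3)]) (rule nowhere_dense_imp_meager[OF nowhere_dense_closed]; simp)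
  moreover have "negligible (\<Union>p\<in>P. {p})"
    by (rule negligible_countable_Union) (use assms(3) in auto)
  ultimately have "meager ({z. fst z \<in> X} \<union> P)" "negligible ({z. fst z \<in> X} \<union> P)"
    unfolding lines by (metis points meager_Un negligible_Un)+
  then show ?thesis
    using assms(1) meager_mono negligible_subset by blast
qed

lemma lnull_iff_negligible: "lnull S \<longleftrightarrow> negligible S"
  by (simp add: lnull_def negligible_iff_null_sets)

lemma well_order_recursive_choice:
  fixes W :: "'a rel" and Good :: "('a \<Rightarrow> 'b) \<Rightarrow> 'a \<Rightarrow> 'b set"
  assumes "Well_order W"
    and local: "\<And>f f' r. (\<And>s. s \<in> underS W r \<Longrightarrow> f s = f' s) \<Longrightarrow> Good f r = Good f' r"
    and nonempty: "\<And>f r. r \<in> I \<Longrightarrow> Good f r \<noteq> {}"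
  obtains F where "\<And>r. r \<in> I \<Longrightarrow> F r \<in> Good F r"
proof -
  define R where "R = W - Id"
  have "wf R"
    using assms(1) unfolding R_def by (simp add: wo_rel.WF wo_rel_def)
  define F where "F = wfrec R (\<lambda>f r. SOME x. x \<in> Good f r)"
  have F: "F r = (SOME x. x \<in> Good F r)" for r
  proof -
    have "F r = (SOME x. x \<in> Good (cut F R r) r)"
      unfolding F_def by (subst wfrec[OF \<open>wf R\<close>]) (rule refl)
    also have "Good (cut F R r) r = Good F r"
      by (rule local) (simp add: cut_apply R_def underS_def)
    finally show ?thesis .
  qed
  show ?thesis
  proof (rule that)
    fix r assume "r \<in> I"
    then show "F r \<in> Good F r"
      unfolding F[of r] using nonempty by (simp add: some_in_eq)
  qed
qed

lemma countable_sections_separating_set: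
  fixes W :: "'a rel" and T :: "'a \<Rightarrow> ('a \<times> 'b) set"
  assumes W: "Well_order W" "Field W = UNIV" "\<And>r. countable (under W r)"
    and large: "\<And>r P. r \<in> I \<Longrightarrow> countable P \<Longrightarrow> \<not> T r \<subseteq> {z. fst z \<in> under W r} \<union> P"
  obtains C where "\<And>x. countable {y. (x, y) \<in> C}"
    and "\<And>r. r \<in> I \<Longrightarrow> T r \<inter> C \<noteq> {}" and "\<And>r. r \<in> I \<Longrightarrow> \<not> T r \<subseteq> C"
proof -
  have countable_underS: "countable (underS W r)" for r
    using W(3) underS_subset_under countable_subset by metis
  have "wo_rel W"
    using W(1) by (simp add: wo_rel_def)
  then have total: "(a, b) \<in> W \<or> (b, a) \<in> W" for a b
    using wo_rel.TOTALS W(2) by blast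
  define Used where "Used f r = fst ` f ` underS W r \<union> snd ` f ` underS W r"
    for f :: "'a \<Rightarrow> ('a \<times> 'b) \<times> ('a \<times> 'b)" and r
  define Bad where "Bad f r = {z. fst z \<in> under W r} \<union> Used f r" for f r
  define Good where "Good f r = {(p, q). p \<in> T r - Bad f r \<and> q \<in> T r - Bad f r \<and> p \<noteq> q}"
    for f r
  have Good_local: "Good f r = Good f' r" if "\<And>s. s \<in> underS W r \<Longrightarrow> f s = f' s" for f f' r
  proof -
    have "f ` underS W r = f' ` underS W r"
      using that by (rule image_cong[OF refl])
    then show ?thesis
      by (simp add: Good_def Bad_def Used_def)
  qed
  have Good_nonempty: "Good f r \<noteq> {}" if r: "r \<in> I" for f r
  proof -
    have "countable (Used f r)"
      using countable_underS by (simp add: Used_def)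
    then obtain p where p: "p \<in> T r" "p \<notin> Bad f r"
      using large[OF r] unfolding Bad_def by blast
    have "countable (insert p (Used f r))"
      using \<open>countable (Used f r)\<close> by simp
    then obtain q where "q \<in> T r" "q \<notin> Bad f r" "q \<noteq> p"
      using large[OF r] unfolding Bad_def by blast
    then have "(p, q) \<in> Good f r"
      using p by (auto simp: Good_def)
    then show ?thesis
      by blast
  qed
  obtain F where F: "\<And>r. r \<in> I \<Longrightarrow> F r \<in> Good F r"
    using well_order_recursive_choice[where Good = Good and I = I, OF W(1) Good_local Good_nonempty]
    by blast
  have first: "fst (F r) \<in> T r" "fst (F r) \<notin> Bad F r"
    and second: "snd (F r) \<in> T r" "snd (F r) \<notin> Bad F r"
    and distinct: "fst (F r) \<noteq> snd (F r)" if "r \<in> I" for r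
    using F[OF that] by (auto simp: Good_def)
  define C where "C = (\<lambda>r. fst (F r)) ` I"
  show ?thesis
  proof (rule that)
    fix x
    have "{y. (x, y) \<in> C} \<subseteq> snd ` fst ` F ` underS W x"
    proof
      fix y assume "y \<in> {y. (x, y) \<in> C}"
      then obtain r where r: "r \<in> I" "(x, y) = fst (F r)"
        by (auto simp: C_def)
      then have "(x, r) \<notin> W"
        using first(2)[OF r(1)] unfolding r(2)[symmetric] by (auto simp: Bad_def under_def)
      then have "r \<in> underS W x"
        using total[of x r] total[of x x] by (auto simp: underS_def)
      then show "y \<in> snd ` fst ` F ` underS W x"
        using r(2) by (metis image_eqI snd_conv)
    qed
    then show "countable {y. (x, y) \<in> C}"
      by (rule countable_subset) (use countable_underS in simp)
  next
    fix r assume "r \<in> I"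
    then show "T r \<inter> C \<noteq> {}"
      using first(1) by (auto simp: C_def)
  next
    fix r assume r: "r \<in> I"
    have "snd (F r) \<notin> C"
    proof
      assume "snd (F r) \<in> C"
      then obtain s where s: "s \<in> I" "snd (F r) = fst (F s)"
        by (auto simp: C_def)
      \<comment> \<open>whichever of \<open>r\<close>, \<open>s\<close> comes later has avoided the points chosen by the other\<close>
      have "s \<noteq> r"
        using distinct[OF r] s(2) by auto
      moreover have "s \<notin> underS W r"
        using second(2)[OF r] s(2) by (auto simp: Bad_def Used_def)
      moreover have "r \<notin> underS W s"
        using first(2)[OF s(1)] unfolding s(2)[symmetric] by (auto simp: Bad_def Used_def)
      ultimately show False
        using total[of r s] by (auto simp: underS_def)
    qed
    then show "\<not> T r \<subseteq> C"
      using second(1)[OF r] by blast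
  qed
qed

lemma CH_imp_countable_initial_segments:
  assumes "CH"
  obtains W :: "real rel" where "Well_order W" "Field W = UNIV" "\<And>a. countable (under W a)"
proof -
  let ?W = "card_of (UNIV :: real set)"
  have underS: "countable (underS ?W a)" for a
  proof (rule ccontr)
    assume "uncountable (underS ?W a)"
    then have "underS ?W a \<approx> (UNIV :: real set)"
      using assms by (simp add: CH_def)
    then have "(card_of (underS ?W a), ?W) \<in> ordIso"
      by (simp add: eqpoll_iff_card_of_ordIso)
    moreover have "(card_of (underS ?W a), ?W) \<in> ordLess"
      by (rule card_of_underS[OF card_of_Card_order]) (simp add: Field_card_of)
    ultimately show False
      using not_ordLess_ordIso by blast
  qed
  have "under ?W a \<subseteq> insert a (underS ?W a)" for a
    by (auto simp: under_def underS_def)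
  then have "countable (under ?W a)" for a
    using underS countable_subset by (metis countable_insert)
  then show ?thesis
    using that card_of_well_order_on[of "UNIV :: real set"] by (simp add: Field_card_of)
qed

theorem mainTheorem5:
  assumes "CH"
  shows "\<exists>A :: (real \<times> real) set.
           (\<forall>x::real. countable (UNIV - {y. (x, y) \<in> A}))
         \<and> completely_nonmeasurable meager A
         \<and> completely_nonmeasurable lnull A"
proof -
  obtain W :: "real rel" where W: "Well_order W" "Field W = UNIV" "\<And>a. countable (under W a)"
    by (rule CH_imp_countable_initial_segments[OF assms]) blast
  obtain g :: "real \<Rightarrow> (real \<times> real) set" where g: "\<And>S. gdelta S \<Longrightarrow> S \<in> range g"
    by (rule gdelta_subset_range_real) blast
  define I where "I = {r. \<not> meager (g r) \<or> \<not> negligible (g r)}"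
  have large: "\<not> g r \<subseteq> {z. fst z \<in> under W r} \<union> P" if "r \<in> I" "countable P" for r P
    by (rule not_subset_countable_vertical_lines) (use that W(3) in \<open>auto simp: I_def\<close>)
  obtain C where C: "\<And>x. countable {y. (x, y) \<in> C}"
    "\<And>r. r \<in> I \<Longrightarrow> g r \<inter> C \<noteq> {}" "\<And>r. r \<in> I \<Longrightarrow> \<not> g r \<subseteq> C"
    using countable_sections_separating_set[where T = g and I = I, OF W large] by blast
  have "- C \<inter> B \<noteq> {} \<and> \<not> B \<subseteq> - C" if B: "B \<in> sets borel" "\<not> meager B \<or> \<not> negligible B" for B
  proof -
    obtain G where G: "gdelta G" "G \<subseteq> B" "\<not> meager G \<or> \<not> negligible G"
      using borel_positive_contains_gdelta[OF B] by blast
    then obtain r where "G = g r"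
      using g by blast
    then show ?thesis
      using C(2,3)[of r] G unfolding I_def by blast
  qed
  moreover have "UNIV - {y. (x, y) \<in> - C} = {y. (x, y) \<in> C}" for x
    by auto
  ultimately show ?thesis
    using C(1) unfolding completely_nonmeasurable_def lnull_iff_negligible
    by (intro exI[of _ "- C"]) auto
qed

end
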